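(* Let $m\geq 13$ and $n\geq 13$ be integers with $m\equiv 2\pmod 3$ and $n\not\equiv 2\pmod 3$. Then $\gamma_{sR}(C_m\vee C_n)=3$.
   Context: $C_n$ denotes the cycle on $n$ vertices. For a graph $G=(V,E)$ and $x\in V$, $N_G[x]=\{x\}\cup\{y: xy\in E\}$. A signed Roman dominating function (SRDF) on $G$ is a function $f:V\to\{-1,1,2\}$ such that (a) $\sum_{y\in N_G[x]}f(y)\geq 1$ for every $x\in V$, and (b) every vertex $x$ with $f(x)=-1$ is adjacent to at least one vertex $y$ with $f(y)=2$. The weight of $f$ is $\sum_{x\in V}f(x)$, and $\gamma_{sR}(G)$ is the minimum weight of an SRDF on $G$. The join $G_1\vee G_2$ of two graphs has vertex set $V(G_1)\cup V(G_2)$ (disjoint union) and edge set $E(G_1)\cup E(G_2)\cup\{uv: u\in V(G_1), v\in V(G_2)\}$. *)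

theory Defs
  imports Main
begin

text \<open>A finite simple graph is represented by a vertex set V and a symmetric,
irreflexive adjacency predicate E.\<close>

definition closed_nbhd :: "'a set \<Rightarrow> ('a \<Rightarrow> 'a \<Rightarrow> bool) \<Rightarrow> 'a \<Rightarrow> 'a set" where
  "closed_nbhd V E x = {x} \<union> {y \<in> V. E x y}"

definition is_SRDF :: "'a set \<Rightarrow> ('a \<Rightarrow> 'a \<Rightarrow> bool) \<Rightarrow> ('a \<Rightarrow> int) \<Rightarrow> bool" where
  "is_SRDF V E f \<longleftrightarrow>
     (\<forall>x\<in>V. f x \<in> {-1, 1, 2}) \<and>
     (\<forall>x\<in>V. (\<Sum>y\<in>closed_nbhd V E x. f y) \<ge> 1) \<and>
     (\<forall>x\<in>V. f x = -1 \<longrightarrow> (\<exists>y\<in>V. E x y \<and> f y = 2))"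

definition SRDF_weight :: "'a set \<Rightarrow> ('a \<Rightarrow> int) \<Rightarrow> int" where
  "SRDF_weight V f = (\<Sum>x\<in>V. f x)"

definition gamma_sR :: "'a set \<Rightarrow> ('a \<Rightarrow> 'a \<Rightarrow> bool) \<Rightarrow> int" where
  "gamma_sR V E = Min {SRDF_weight V f | f. is_SRDF V E f}"

definition cycle_V :: "nat \<Rightarrow> nat set" where
  "cycle_V n = {0..<n}"

definition cycle_E :: "nat \<Rightarrow> nat \<Rightarrow> nat \<Rightarrow> bool" where
  "cycle_E n i j \<longleftrightarrow> i < n \<and> j < n \<and> i \<noteq> j \<and> (j = (i + 1) mod n \<or> i = (j + 1) mod n)"

definition join_V :: "'a set \<Rightarrow> 'b set \<Rightarrow> ('a + 'b) set" where
  "join_V V1 V2 = V1 <+> V2"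

fun join_E :: "('a \<Rightarrow> 'a \<Rightarrow> bool) \<Rightarrow> ('b \<Rightarrow> 'b \<Rightarrow> bool) \<Rightarrow> ('a + 'b) \<Rightarrow> ('a + 'b) \<Rightarrow> bool" where
  "join_E E1 E2 (Inl a) (Inl a') = E1 a a'"
| "join_E E1 E2 (Inr b) (Inr b') = E2 b b'"
| "join_E E1 E2 (Inl a) (Inr b) = True"
| "join_E E1 E2 (Inr b) (Inl a) = True"

end

theory Submission
  imports Defs
begin

text \<open>
Let \<open>f\<close> be a signed Roman dominating function on \<open>C\<^sub>m \<or> C\<^sub>n\<close> with weight \<open>A\<close> on
\<open>C\<^sub>m\<close> and \<open>B\<close> on \<open>C\<^sub>n\<close>. Every vertex of \<open>C\<^sub>m\<close> sees all of \<open>C\<^sub>n\<close>, so its closed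
neighbourhood sum on the cycle plus \<open>B\<close> is at least 1; summing over \<open>C\<^sub>m\<close> counts each
label three times and gives \<open>3A + mB \<ge> m\<close>, and symmetrically \<open>3B + nA \<ge> n\<close>. For
\<open>m, n \<ge> 7\<close> this forces \<open>A + B \<ge> 3\<close> except when \<open>A = B = 1\<close>. In that case the labels on
\<open>C\<^sub>n\<close> have nonnegative closed neighbourhood sums and total 1. A label 1 would make four
of these sums positive, so their total \<open>3B\<close> would exceed 3; hence all labels lie in
\<open>{-1, 2}\<close>, so \<open>B \<equiv> -n (mod 3)\<close> and \<open>n \<equiv> 2 (mod 3)\<close>.

Weight 3 is attained by repeating \<open>-1, 2, -1\<close> on \<open>C\<^sub>m\<close> (weight 1) and \<open>2, -1, -1\<close> on
\<open>C\<^sub>n\<close>, raising the last label to 1 if it is \<open>-1\<close> (weight 2).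
\<close>

lemma finite_SRDF_weights:
  assumes "finite V"
  shows "finite {SRDF_weight V f | f. is_SRDF V E f}"
proof (rule finite_subset)
  show "{SRDF_weight V f | f. is_SRDF V E f} \<subseteq> {-2 * int (card V)..2 * int (card V)}"
  proof clarify
    fix f assume "is_SRDF V E f"
    then have bounds: "\<forall>x\<in>V. -2 \<le> f x \<and> f x \<le> 2" unfolding is_SRDF_def by auto
    have "(\<Sum>x\<in>V. -2) \<le> (\<Sum>x\<in>V. f x)" using bounds by (intro sum_mono) auto
    moreover have "(\<Sum>x\<in>V. f x) \<le> (\<Sum>x\<in>V. 2)" using bounds by (intro sum_mono) auto
    ultimately show "SRDF_weight V f \<in> {-2 * int (card V)..2 * int (card V)}"
      by (simp add: SRDF_weight_def)
  qed
qed simp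

lemma gamma_sR_eqI:
  assumes "finite V" "is_SRDF V E f" "SRDF_weight V f = k"
    and "\<And>g. is_SRDF V E g \<Longrightarrow> k \<le> SRDF_weight V g"
  shows "gamma_sR V E = k"
  unfolding gamma_sR_def
  using assms by (intro Min_eqI finite_SRDF_weights) auto

definition cycle_succ :: "nat \<Rightarrow> nat \<Rightarrow> nat" where
  "cycle_succ n i = (if Suc i = n then 0 else Suc i)"

definition cycle_pred :: "nat \<Rightarrow> nat \<Rightarrow> nat" where
  "cycle_pred n i = (if i = 0 then n - 1 else i - 1)"

definition cycle_nbhd_sum :: "nat \<Rightarrow> (nat \<Rightarrow> int) \<Rightarrow> nat \<Rightarrow> int" where
  "cycle_nbhd_sum n g i = g (cycle_pred n i) + g i + g (cycle_succ n i)"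

lemma cycle_V_eq: "cycle_V n = {..<n}"
  by (simp add: cycle_V_def atLeast0LessThan)

lemma cycle_pred_succ:
  assumes "i < n"
  shows "cycle_pred n i < n" "cycle_succ n i < n"
    "cycle_succ n (cycle_pred n i) = i" "cycle_pred n (cycle_succ n i) = i"
  using assms by (auto simp: cycle_pred_def cycle_succ_def)

lemma cycle_E_iff:
  assumes "i < n" "j < n"
  shows "cycle_E n i j \<longleftrightarrow> i \<noteq> j \<and> (j = cycle_succ n i \<or> j = cycle_pred n i)"
proof -
  have "(k + 1) mod n = cycle_succ n k" if "k < n" for k
    using that by (simp add: cycle_succ_def mod_Suc)
  then show ?thesis
    using assms unfolding cycle_E_def by (auto simp: cycle_succ_def cycle_pred_def split: if_splits)
qed

lemma sum_closed_nbhd_cycle: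
  assumes "3 \<le> n" "i < n"
  shows "(\<Sum>y\<in>closed_nbhd (cycle_V n) (cycle_E n) i. g y) = cycle_nbhd_sum n g i"
proof -
  have "closed_nbhd (cycle_V n) (cycle_E n) i = {cycle_pred n i, i, cycle_succ n i}"
    using assms cycle_pred_succ[OF assms(2)]
    by (auto simp: closed_nbhd_def cycle_V_eq cycle_E_iff)
  moreover have "cycle_pred n i \<noteq> i" "cycle_pred n i \<noteq> cycle_succ n i" "i \<noteq> cycle_succ n i"
    using assms by (auto simp: cycle_pred_def cycle_succ_def)
  ultimately show ?thesis by (simp add: cycle_nbhd_sum_def)
qed

lemma sum_cycle_succ: "0 < n \<Longrightarrow> (\<Sum>i<n. g (cycle_succ n i)) = (\<Sum>i<n. g i)"
proof -
  assume "0 < n"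
  then obtain k where n: "n = Suc k" by (cases n) auto
  have "(\<Sum>i<Suc k. g (cycle_succ (Suc k) i)) = (\<Sum>i<k. g (Suc i)) + g 0"
    by (simp add: cycle_succ_def)
  also have "\<dots> = (\<Sum>i<Suc k. g i)"
    by (subst sum.lessThan_Suc_shift) (simp add: add.commute)
  finally show ?thesis using n by simp
qed

lemma sum_cycle_pred: "0 < n \<Longrightarrow> (\<Sum>i<n. g (cycle_pred n i)) = (\<Sum>i<n. g i)"
proof -
  assume "0 < n"
  then obtain k where n: "n = Suc k" by (cases n) auto
  have "(\<Sum>i<Suc k. g (cycle_pred (Suc k) i)) = g k + (\<Sum>i<k. g i)"
    by (subst sum.lessThan_Suc_shift) (simp add: cycle_pred_def)
  also have "\<dots> = (\<Sum>i<Suc k. g i)" by (simp add: add.commute)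
  finally show ?thesis using n by simp
qed

lemma sum_cycle_nbhd_sum: "0 < n \<Longrightarrow> (\<Sum>i<n. cycle_nbhd_sum n g i) = 3 * (\<Sum>i<n. g i)"
  by (simp add: cycle_nbhd_sum_def sum.distrib sum_cycle_succ sum_cycle_pred)

lemma cycle_nbhd_sum_ge_1_if_label_one:
  assumes "{g (cycle_pred n i), g i, g (cycle_succ n i)} \<subseteq> {-1, 1, 2}"
    and "0 \<le> cycle_nbhd_sum n g i" and "1 \<in> {g (cycle_pred n i), g i, g (cycle_succ n i)}"
  shows "1 \<le> cycle_nbhd_sum n g i"
  using assms unfolding cycle_nbhd_sum_def by auto

lemma cycle_weight_ge_2_if_label_one:
  assumes "4 \<le> n" and vals: "\<forall>i<n. g i \<in> {-1, 1, 2}"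
    and nonneg: "\<forall>i<n. 0 \<le> cycle_nbhd_sum n g i" and "j < n" "g j = 1"
  shows "2 \<le> (\<Sum>i<n. g i)"
proof -
  let ?s = "cycle_nbhd_sum n g" and ?p = "cycle_pred n" and ?q = "cycle_succ n"
  have pos: "1 \<le> ?s i" if "i < n" "1 \<in> {g (?p i), g i, g (?q i)}" for i
    using cycle_nbhd_sum_ge_1_if_label_one[of g n i] vals nonneg cycle_pred_succ[OF \<open>i < n\<close>] that
    by auto
  have part: "sum ?s S \<le> (\<Sum>i<n. ?s i)" if "S \<subseteq> {..<n}" for S
    using that nonneg by (intro sum_mono2) auto
  have "4 \<le> (\<Sum>i<n. ?s i)"
  proof (cases "2 \<le> ?s j")
    case True
    have "{?p j, j, ?q j} \<subseteq> {..<n}" using cycle_pred_succ[OF \<open>j < n\<close>] \<open>j < n\<close> by auto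
    moreover have "?p j \<noteq> j" "?p j \<noteq> ?q j" "j \<noteq> ?q j"
      using \<open>4 \<le> n\<close> \<open>j < n\<close> by (auto simp: cycle_pred_def cycle_succ_def)
    moreover have "1 \<le> ?s (?p j)" "1 \<le> ?s (?q j)"
      using pos[of "?p j"] pos[of "?q j"] cycle_pred_succ[OF \<open>j < n\<close>] \<open>g j = 1\<close> by auto
    ultimately show ?thesis using part[of "{?p j, j, ?q j}"] True by simp
  next
    case False
    then have "g (?p j) + g (?q j) = 0"
      using pos[of j] \<open>j < n\<close> \<open>g j = 1\<close> unfolding cycle_nbhd_sum_def by auto
    moreover have "g (?p j) \<in> {-1, 1, 2}" "g (?q j) \<in> {-1, 1, 2}"
      using vals cycle_pred_succ[OF \<open>j < n\<close>] by auto
    ultimately have "g (?p j) = 1 \<or> g (?q j) = 1" by auto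
    then obtain i where i: "i < n" "g i = 1" "g (?q i) = 1"
      using cycle_pred_succ[OF \<open>j < n\<close>] \<open>j < n\<close> \<open>g j = 1\<close> by metis
    define S where "S = {?p i, i, ?q i, ?q (?q i)}"
    have "S \<subseteq> {..<n}" using cycle_pred_succ \<open>i < n\<close> by (auto simp: S_def)
    moreover have "card S = 4"
      using \<open>4 \<le> n\<close> \<open>i < n\<close> by (auto simp: S_def cycle_pred_def cycle_succ_def card_insert_if)
    moreover have "\<forall>k\<in>S. 1 \<le> ?s k"
      using pos cycle_pred_succ \<open>i < n\<close> i by (auto simp: S_def)
    then have "int (card S) \<le> sum ?s S"
      using sum_mono[of S "\<lambda>_. 1" ?s] by simp
    ultimately show ?thesis using part[of S] by simp
  qed
  then show ?thesis using sum_cycle_nbhd_sum[of n g] \<open>4 \<le> n\<close> by simp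
qed

lemma three_dvd_sum_plus_card:
  assumes "\<forall>i<n. g i \<in> {-1, 2}"
  shows "3 dvd (\<Sum>i<n. g i) + int n"
proof -
  have "3 dvd (\<Sum>i<n. g i + 1)"
    using assms by (intro dvd_sum) auto
  then show ?thesis by (simp add: sum.distrib)
qed

lemma cycle_weight_one_imp_mod3:
  assumes "4 \<le> n" "\<forall>i<n. g i \<in> {-1, 1, 2}" "\<forall>i<n. 0 \<le> cycle_nbhd_sum n g i"
    and "(\<Sum>i<n. g i) = 1"
  shows "n mod 3 = 2"
proof -
  have "\<forall>i<n. g i \<in> {-1, 2}"
    using assms cycle_weight_ge_2_if_label_one[of n g] by fastforce
  then have "3 dvd 1 + int n" using three_dvd_sum_plus_card assms(4) by metis
  then show ?thesis by presburger
qed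

lemma closed_nbhd_join_Inl:
  "closed_nbhd (join_V V1 V2) (join_E E1 E2) (Inl a) = closed_nbhd V1 E1 a <+> V2"
  unfolding closed_nbhd_def join_V_def by auto

lemma closed_nbhd_join_Inr:
  "closed_nbhd (join_V V1 V2) (join_E E1 E2) (Inr b) = V1 <+> closed_nbhd V2 E2 b"
  unfolding closed_nbhd_def join_V_def by auto

abbreviation join_cycles_V :: "nat \<Rightarrow> nat \<Rightarrow> (nat + nat) set" where
  "join_cycles_V m n \<equiv> join_V (cycle_V m) (cycle_V n)"

abbreviation join_cycles_E :: "nat \<Rightarrow> nat \<Rightarrow> nat + nat \<Rightarrow> nat + nat \<Rightarrow> bool" where
  "join_cycles_E m n \<equiv> join_E (cycle_E m) (cycle_E n)"

lemma join_cycles_V_eq: "join_cycles_V m n = {..<m} <+> {..<n}"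
  by (simp add: join_V_def cycle_V_eq)

lemma SRDF_weight_join_cycles:
  "SRDF_weight (join_cycles_V m n) f = (\<Sum>i<m. f (Inl i)) + (\<Sum>j<n. f (Inr j))"
  by (simp add: SRDF_weight_def join_cycles_V_eq sum.Plus)

lemma sum_closed_nbhd_join_cycles_Inl:
  assumes "3 \<le> m" "i < m"
  shows "(\<Sum>y\<in>closed_nbhd (join_cycles_V m n) (join_cycles_E m n) (Inl i). f y)
    = cycle_nbhd_sum m (f \<circ> Inl) i + (\<Sum>j<n. f (Inr j))"
proof -
  have "finite (closed_nbhd (cycle_V m) (cycle_E m) i)"
    by (simp add: closed_nbhd_def cycle_V_eq)
  then show ?thesis
    using sum_closed_nbhd_cycle[OF assms, of "f \<circ> Inl"]
    by (simp add: closed_nbhd_join_Inl sum.Plus cycle_V_eq)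
qed

lemma sum_closed_nbhd_join_cycles_Inr:
  assumes "3 \<le> n" "j < n"
  shows "(\<Sum>y\<in>closed_nbhd (join_cycles_V m n) (join_cycles_E m n) (Inr j). f y)
    = (\<Sum>i<m. f (Inl i)) + cycle_nbhd_sum n (f \<circ> Inr) j"
proof -
  have "finite (closed_nbhd (cycle_V n) (cycle_E n) j)"
    by (simp add: closed_nbhd_def cycle_V_eq)
  then show ?thesis
    using sum_closed_nbhd_cycle[OF assms, of "f \<circ> Inr"]
    by (simp add: closed_nbhd_join_Inr sum.Plus cycle_V_eq)
qed

lemma SRDF_weight_join_cycles_ge_3:
  assumes "7 \<le> m" "7 \<le> n" "n mod 3 \<noteq> 2"
    and f: "is_SRDF (join_cycles_V m n) (join_cycles_E m n) f"
  shows "3 \<le> SRDF_weight (join_cycles_V m n) f"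
proof -
  define A where "A = (\<Sum>i<m. f (Inl i))"
  define B where "B = (\<Sum>j<n. f (Inr j))"
  have dom: "1 \<le> (\<Sum>y\<in>closed_nbhd (join_cycles_V m n) (join_cycles_E m n) x. f y)"
    if "x \<in> join_cycles_V m n" for x
    using f that unfolding is_SRDF_def by blast
  have dom_l: "1 \<le> cycle_nbhd_sum m (f \<circ> Inl) i + B" if "i < m" for i
    using dom[of "Inl i"] that assms sum_closed_nbhd_join_cycles_Inl[of m i, where n = n and f = f]
    by (auto simp: B_def join_cycles_V_eq)
  have dom_r: "1 \<le> A + cycle_nbhd_sum n (f \<circ> Inr) j" if "j < n" for j
    using dom[of "Inr j"] that assms sum_closed_nbhd_join_cycles_Inr[of n j, where m = m and f = f]
    by (auto simp: A_def join_cycles_V_eq)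
  have count_l: "int m \<le> 3 * A + int m * B"
  proof -
    have "(\<Sum>i<m. 1) \<le> (\<Sum>i<m. cycle_nbhd_sum m (f \<circ> Inl) i + B)"
      using dom_l by (intro sum_mono) auto
    then show ?thesis using assms by (simp add: sum.distrib sum_cycle_nbhd_sum A_def)
  qed
  have count_r: "int n \<le> 3 * B + int n * A"
  proof -
    have "(\<Sum>j<n. 1) \<le> (\<Sum>j<n. A + cycle_nbhd_sum n (f \<circ> Inr) j)"
      using dom_r by (intro sum_mono) auto
    then show ?thesis using assms by (simp add: sum.distrib sum_cycle_nbhd_sum B_def)
  qed
  have not_both_1: "\<not> (A = 1 \<and> B = 1)"
  proof
    assume "A = 1 \<and> B = 1"
    moreover have "\<forall>j<n. f (Inr j) \<in> {-1, 1, 2}"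
      using f unfolding is_SRDF_def join_cycles_V_eq by auto
    ultimately have "n mod 3 = 2"
      using dom_r assms by (intro cycle_weight_one_imp_mod3[of n "f \<circ> Inr"]) (auto simp: B_def)
    with assms show False by simp
  qed
  have "3 \<le> A + B"
  proof (cases "B \<le> 0 \<or> A \<le> 0")
    case True
    have "int m * B \<le> 3 * B" if "B \<le> 0" using that assms by (simp add: mult_right_mono_neg)
    moreover have "int n * A \<le> 3 * A" if "A \<le> 0" using that assms by (simp add: mult_right_mono_neg)
    ultimately show ?thesis using True count_l count_r assms by linarith
  next
    case False
    then show ?thesis using not_both_1 by auto
  qed
  then show ?thesis by (simp add: SRDF_weight_join_cycles A_def B_def)
qed

definition period3_label :: "nat \<Rightarrow> nat \<Rightarrow> int" where
  "period3_label r i = (if i mod 3 = r then 2 else -1)"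

definition raised_period3_label :: "nat \<Rightarrow> nat \<Rightarrow> int" where
  "raised_period3_label n = (period3_label 0)(n - 1 := max 1 (period3_label 0 (n - 1)))"

lemma period3_label_consecutive:
  "r < 3 \<Longrightarrow> period3_label r j + period3_label r (Suc j) + period3_label r (Suc (Suc j)) = 0"
  by (auto simp: period3_label_def mod_Suc)

lemma sum_period3_label: "r < 3 \<Longrightarrow> (\<Sum>i<3 * q. period3_label r i) = 0"
proof (induction q)
  case (Suc q)
  have "(\<Sum>i<3 * Suc q. period3_label r i) = (\<Sum>i<Suc (Suc (Suc (3 * q))). period3_label r i)"
    by (simp add: numeral_3_eq_3)
  with Suc period3_label_consecutive[of r "3 * q"] show ?case by simp
qed simp

lemma cycle_nbhd_sum_period3_label_interior:
  assumes "r < 3" "0 < i" "Suc i < n"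
  shows "cycle_nbhd_sum n (period3_label r) i = 0"
  using assms period3_label_consecutive[of r "i - 1"]
  by (simp add: cycle_nbhd_sum_def cycle_pred_def cycle_succ_def)

lemma cycle_nbhd_sum_mono: "(\<And>k. g k \<le> h k) \<Longrightarrow> cycle_nbhd_sum n g i \<le> cycle_nbhd_sum n h i"
  unfolding cycle_nbhd_sum_def by (simp add: add_mono)

lemma period3_label_le_raised: "period3_label 0 j \<le> raised_period3_label n j"
  by (simp add: raised_period3_label_def)

lemma period3_label_ge: "-1 \<le> period3_label r j"
  by (simp add: period3_label_def)

lemma sum_period3_label_1:
  assumes "m mod 3 = 2"
  shows "(\<Sum>i<m. period3_label 1 i) = 1"
proof -
  define q where "q = m div 3"
  have "m = Suc (Suc (3 * q))" using assms div_mult_mod_eq[of m 3] unfolding q_def by linarith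
  then show ?thesis using sum_period3_label[of 1 q] by (simp add: period3_label_def)
qed

lemma sum_raised_period3_label:
  assumes "n mod 3 \<noteq> 2" "0 < n"
  shows "(\<Sum>j<n. raised_period3_label n j) = 2"
proof -
  have init: "(\<Sum>j<3 * q. raised_period3_label n j) = 0" if "3 * q \<le> n - 1" for q
  proof -
    have "(\<Sum>j<3 * q. raised_period3_label n j) = (\<Sum>j<3 * q. period3_label 0 j)"
      using that by (intro sum.cong) (auto simp: raised_period3_label_def)
    then show ?thesis using sum_period3_label[of 0 q] by simp
  qed
  have "n mod 3 < 3" by simp
  then consider "n mod 3 = 1" | "n mod 3 = 0" using assms by linarith
  then show ?thesis
  proof cases
    case 1
    define q where "q = n div 3"
    have n: "n = Suc (3 * q)" using 1 div_mult_mod_eq[of n 3] unfolding q_def by linarith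
    show ?thesis using init[of q] by (simp add: n raised_period3_label_def period3_label_def)
  next
    case 2
    define q where "q = n div 3 - 1"
    have n: "n = Suc (Suc (Suc (3 * q)))"
      using 2 \<open>0 < n\<close> div_mult_mod_eq[of n 3] unfolding q_def by linarith
    show ?thesis using init[of q] by (simp add: n raised_period3_label_def period3_label_def mod_Suc)
  qed
qed


lemma cycle_nbhd_sum_period3_label_1_nonneg:
  assumes "m mod 3 = 2" "i < m"
  shows "0 \<le> cycle_nbhd_sum m (period3_label 1) i"
proof -
  consider "i = 0" | "Suc i = m" | "0 < i" "Suc i < m" using assms by linarith
  then show ?thesis
  proof cases
    case 1
    have "period3_label 1 (Suc 0) = 2" by (simp add: period3_label_def)
    then show ?thesis using 1 assms period3_label_ge[of 1 "m - 1"] period3_label_ge[of 1 0]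
      by (simp add: cycle_nbhd_sum_def cycle_pred_def cycle_succ_def)
  next
    case 2
    then have "i mod 3 = 1" using assms mod_Suc[of i 3] by (auto split: if_splits)
    then have "period3_label 1 i = 2" by (simp add: period3_label_def)
    then show ?thesis using 2 period3_label_ge[of 1 "i - 1"] period3_label_ge[of 1 0]
      by (simp add: cycle_nbhd_sum_def cycle_pred_def cycle_succ_def)
  next
    case 3
    then show ?thesis by (simp add: cycle_nbhd_sum_period3_label_interior)
  qed
qed


lemma cycle_nbhd_sum_raised_period3_label_nonneg:
  assumes "3 \<le> n" "i < n"
  shows "0 \<le> cycle_nbhd_sum n (raised_period3_label n) i"
proof -
  have ge: "-1 \<le> raised_period3_label n j" for j
    using period3_label_ge[of 0 j] period3_label_le_raised[of j n] by linarith
  have two: "raised_period3_label n 0 = 2"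
    by (simp add: raised_period3_label_def period3_label_def)
  consider "i = 0" | "Suc i = n" | "0 < i" "Suc i < n" using assms by linarith
  then show ?thesis
  proof cases
    case 1
    then show ?thesis using ge[of "n - 1"] ge[of 1] two
      by (simp add: cycle_nbhd_sum_def cycle_pred_def cycle_succ_def)
  next
    case 2
    then show ?thesis using ge[of i] ge[of "i - 1"] two
      by (simp add: cycle_nbhd_sum_def cycle_pred_def cycle_succ_def)
  next
    case 3
    then have "cycle_nbhd_sum n (period3_label 0) i = 0"
      by (simp add: cycle_nbhd_sum_period3_label_interior)
    moreover have "cycle_nbhd_sum n (period3_label 0) i \<le> cycle_nbhd_sum n (raised_period3_label n) i"
      by (intro cycle_nbhd_sum_mono period3_label_le_raised)
    ultimately show ?thesis by simp
  qed
qed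

definition join_cycles_witness :: "nat \<Rightarrow> nat + nat \<Rightarrow> int" where
  "join_cycles_witness n = case_sum (period3_label 1) (raised_period3_label n)"

lemma SRDF_weight_join_cycles_witness:
  assumes "m mod 3 = 2" "n mod 3 \<noteq> 2" "0 < n"
  shows "SRDF_weight (join_cycles_V m n) (join_cycles_witness n) = 3"
  using sum_period3_label_1[OF assms(1)] sum_raised_period3_label[OF assms(2,3)]
  by (simp add: SRDF_weight_join_cycles join_cycles_witness_def)

lemma is_SRDF_join_cycles_witness:
  assumes "3 \<le> m" "3 \<le> n" "m mod 3 = 2" "n mod 3 \<noteq> 2"
  shows "is_SRDF (join_cycles_V m n) (join_cycles_E m n) (join_cycles_witness n)"
  unfolding is_SRDF_def
proof (intro conjI ballI impI)
  let ?w = "join_cycles_witness n"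
  fix x assume x: "x \<in> join_cycles_V m n"
  show "?w x \<in> {-1, 1, 2}"
    by (cases x) (auto simp: join_cycles_witness_def raised_period3_label_def period3_label_def)
  show "1 \<le> (\<Sum>y\<in>closed_nbhd (join_cycles_V m n) (join_cycles_E m n) x. ?w y)"
    using x
  proof (cases x)
    case (Inl i)
    then have "i < m" using x by (auto simp: join_cycles_V_eq)
    then show ?thesis
      using Inl assms sum_closed_nbhd_join_cycles_Inl[of m i, where n = n and f = ?w]
        cycle_nbhd_sum_period3_label_1_nonneg[of m i] sum_raised_period3_label[of n]
      by (simp add: join_cycles_witness_def comp_def)
  next
    case (Inr j)
    then have "j < n" using x by (auto simp: join_cycles_V_eq)
    then show ?thesis
      using Inr assms sum_closed_nbhd_join_cycles_Inr[of n j, where m = m and f = ?w]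
        cycle_nbhd_sum_raised_period3_label_nonneg[of n j] sum_period3_label_1[of m]
      by (simp add: join_cycles_witness_def comp_def)
  qed
  show "\<exists>y\<in>join_cycles_V m n. join_cycles_E m n x y \<and> ?w y = 2"
  proof (cases x)
    case (Inl i)
    have "?w (Inr 0) = 2"
      by (simp add: join_cycles_witness_def raised_period3_label_def period3_label_def)
    then show ?thesis using Inl assms by (auto simp: join_cycles_V_eq intro!: bexI[of _ "Inr 0"])
  next
    case (Inr j)
    have "?w (Inl 1) = 2" by (simp add: join_cycles_witness_def period3_label_def)
    then show ?thesis using Inr assms by (auto simp: join_cycles_V_eq intro!: bexI[of _ "Inl 1"])
  qed
qed

theorem mainTheorem10:
  fixes m n :: nat
  assumes "m \<ge> 13" and "n \<ge> 13" and "m mod 3 = 2" and "n mod 3 \<noteq> 2"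
  shows "gamma_sR (join_V (cycle_V m) (cycle_V n)) (join_E (cycle_E m) (cycle_E n)) = 3"
proof (rule gamma_sR_eqI)
  show "finite (join_cycles_V m n)" by (simp add: join_cycles_V_eq)
  show "is_SRDF (join_cycles_V m n) (join_cycles_E m n) (join_cycles_witness n)"
    using assms by (intro is_SRDF_join_cycles_witness) auto
  show "SRDF_weight (join_cycles_V m n) (join_cycles_witness n) = 3"
    using assms by (intro SRDF_weight_join_cycles_witness) auto
  show "3 \<le> SRDF_weight (join_cycles_V m n) g"
    if "is_SRDF (join_cycles_V m n) (join_cycles_E m n) g" for g
    using assms that by (intro SRDF_weight_join_cycles_ge_3) auto
qed

end
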